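(* Assume $r(\boldsymbol\gamma)\le2+\alpha\le R(\boldsymbol\gamma)$ and let $(\mathbf A^{\rm d},\mathbf q^{\rm d})$ be an equilibrium with $\mathbf A^{\rm d}\mathbf q^{\rm d}=\boldsymbol\beta$, $\mathbf q^{\rm d}=\boldsymbol\gamma/(2+\alpha)$. Let $\boldsymbol\sigma\in\{-1,1\}^n$ and let $(\mathbf A^{\boldsymbol\sigma},\mathbf q^{\boldsymbol\sigma})$ be an equilibrium with $\mathbf a_i^{\boldsymbol\sigma}=\sigma_i\boldsymbol\beta$ for all $i$ (so $\mathbf q^{\boldsymbol\sigma}=\frac{\boldsymbol\gamma}{2+\alpha}-\frac{\alpha(\boldsymbol\sigma^\top\boldsymbol\gamma-(2+\alpha))}{(2+\alpha)(2+(n+1)\alpha)}\boldsymbol\sigma$). Then $\Omega(\mathbf A^{\rm d},\mathbf q^{\rm d})>\Omega(\mathbf A^{\boldsymbol\sigma},\mathbf q^{\boldsymbol\sigma})$ whenever $$\boldsymbol\sigma^\top\boldsymbol\gamma>2+\alpha\qquad\text{or}\qquad \boldsymbol\sigma^\top\boldsymbol\gamma<\frac{n\alpha(2+\alpha)}{2(1+\alpha)(2+(n+1)\alpha)+n\alpha}.$$ In particular: (i) for $\boldsymbol\sigma=\mathbf 1$ (all $\mathbf a_i=\boldsymbol\beta$), $\Omega(\mathbf A^{\rm d},\mathbf q^{\rm d})\ge\Omega(\mathbf A^{\mathbf 1},\mathbf q^{\mathbf 1})$, with strict inequality unless $R(\boldsymbol\gamma)=2+\alpha$; (ii) $\Omega(\mathbf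 A^{\rm d},\mathbf q^{\rm d})>\Omega(\mathbf A^{\boldsymbol\sigma},\mathbf q^{\boldsymbol\sigma})$ whenever $\boldsymbol\sigma^\top\boldsymbol\gamma\le0$.
   Context: Model: integers $n\ge2$, $m\ge2$; $\alpha>0$, $\boldsymbol\beta\in\mathbb R^m$ with $\|\boldsymbol\beta\|_2=1$, $\boldsymbol\gamma\in\mathbb R^n$ with all $\gamma_i>0$. With $\mathbf x=\mathbf A\mathbf q$, total surplus $\Omega(\mathbf A,\mathbf q)=\alpha(\mathbf x^\top\boldsymbol\beta-\tfrac12\mathbf x^\top\mathbf x)+\mathbf q^\top\boldsymbol\gamma-\tfrac12\mathbf q^\top\mathbf q$. Oligopoly: firm $i$ chooses a unit vector $\mathbf a_i\in\mathbb R^m$ and $q_i\ge0$ to maximize $\Pi_i=\alpha q_i\mathbf a_i^\top(\boldsymbol\beta-\sum_{j\ne i}q_j\mathbf a_j)-(1+\alpha)q_i^2+\gamma_iq_i$ given others; $\mathbf A=[\mathbf a_1,\dots,\mathbf a_n]$; an equilibrium is a profile of mutual best responses. $R(\mathbf v)=\|\mathbf v\|_1$, $r(\mathbf v)=2\|\mathbf v\|_\infty-\|\mathbf v\|_1$. *)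

theory Defs
  imports "HOL-Analysis.Analysis"
begin

text \<open>Firms are indexed by the finite type 'n (n = CARD('n)), goods coordinates by 'm.
  A strategy profile is a pair (a, q): a i is the unit vector of firm i (column i of A),
  q is the quantity vector.\<close>

definition xvec :: "('n::finite \<Rightarrow> real^'m) \<Rightarrow> real^'n \<Rightarrow> real^'m" where
  "xvec a q = (\<Sum>i\<in>UNIV. q$i *\<^sub>R a i)"

definition Omega :: "real \<Rightarrow> real^'m \<Rightarrow> real^'n \<Rightarrow> ('n::finite \<Rightarrow> real^'m) \<Rightarrow> real^'n \<Rightarrow> real" where
  "Omega \<alpha> \<beta> \<gamma> a q =
     \<alpha> * (xvec a q \<bullet> \<beta> - (1/2) * (xvec a q \<bullet> xvec a q)) + q \<bullet> \<gamma> - (1/2) * (q \<bullet> q)"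

definition profit :: "real \<Rightarrow> real^'m \<Rightarrow> real^'n \<Rightarrow> ('n::finite \<Rightarrow> real^'m) \<Rightarrow> real^'n
                      \<Rightarrow> 'n \<Rightarrow> real^'m \<Rightarrow> real \<Rightarrow> real" where
  "profit \<alpha> \<beta> \<gamma> a q i ai qi =
     \<alpha> * qi * (ai \<bullet> (\<beta> - (\<Sum>j\<in>UNIV - {i}. q$j *\<^sub>R a j))) - (1 + \<alpha>) * qi\<^sup>2 + \<gamma>$i * qi"

definition is_equilibrium :: "real \<Rightarrow> real^'m \<Rightarrow> real^'n \<Rightarrow> ('n::finite \<Rightarrow> real^'m) \<Rightarrow> real^'n \<Rightarrow> bool" where
  "is_equilibrium \<alpha> \<beta> \<gamma> a q \<longleftrightarrow>
     (\<forall>i. norm (a i) = 1 \<and> q$i \<ge> 0 \<and>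
        (\<forall>ai qi. norm ai = 1 \<and> qi \<ge> 0 \<longrightarrow>
           profit \<alpha> \<beta> \<gamma> a q i ai qi \<le> profit \<alpha> \<beta> \<gamma> a q i (a i) (q$i)))"

definition Rnorm :: "real^'n::finite \<Rightarrow> real" where
  "Rnorm v = (\<Sum>i\<in>UNIV. \<bar>v$i\<bar>)"

definition rnorm :: "real^'n::finite \<Rightarrow> real" where
  "rnorm v = 2 * Max (range (\<lambda>i. \<bar>v$i\<bar>)) - Rnorm v"

end

theory Submission
  imports Defs
begin

text \<open>Each firm's first-order condition is linear in the others' quantities; in a profile where
  every firm points along \<open>\<pm>\<beta>\<close> it involves only the aggregate \<open>\<sigma> \<bullet> q\<close>, so
  \<open>t = 1 - \<sigma> \<bullet> q\<close> is pinned down by \<open>t (2 + (n+1)\<alpha>) = 2 + \<alpha> - \<sigma> \<bullet> \<gamma>\<close>. Both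
  surpluses are then explicit quadratics and their difference factors as
  \<open>\<alpha> t (t ((2+\<alpha>)\<^sup>2 + \<alpha> n) - 2 (1+\<alpha>) \<sigma> \<bullet> \<gamma>) / (2 (2+\<alpha>)\<^sup>2)\<close>, whose sign follows from that
  of \<open>2 + \<alpha> - \<sigma> \<bullet> \<gamma>\<close>.\<close>

lemma concave_quadratic_argmax:
  fixes A c q :: real
  assumes c: "c > 0" and A: "A \<ge> 0" and q: "q \<ge> 0"
    and max: "\<forall>x\<ge>0. A * x - c * x\<^sup>2 \<le> A * q - c * q\<^sup>2"
  shows "2 * c * q = A"
proof -
  define x where "x = A / (2 * c)"
  have "x \<ge> 0" using A c unfolding x_def by simp
  then have "A * x - c * x\<^sup>2 \<le> A * q - c * q\<^sup>2" using max by blast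
  moreover have "(A * q - c * q\<^sup>2) - (A * x - c * x\<^sup>2) = - c * (q - x)\<^sup>2"
    using c unfolding x_def by (simp add: field_simps power2_eq_square)
  ultimately have "c * (q - x)\<^sup>2 \<le> 0" by linarith
  then have "q = x" using c by (simp add: mult_le_0_iff)
  then show ?thesis using c unfolding x_def by simp
qed

lemma profit_as_quadratic:
  "profit \<alpha> \<beta> \<gamma> a q i ai qi =
     (\<alpha> * (ai \<bullet> (\<beta> - (\<Sum>j\<in>UNIV - {i}. q$j *\<^sub>R a j))) + \<gamma>$i) * qi - (1 + \<alpha>) * qi\<^sup>2"
  unfolding profit_def by (simp add: algebra_simps)

lemma equilibrium_first_order:
  assumes eq: "is_equilibrium \<alpha> \<beta> \<gamma> a q" and \<alpha>: "\<alpha> \<ge> 0" and \<gamma>: "\<gamma>$i > 0"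
  shows "2 * (1 + \<alpha>) * q$i = \<alpha> * (a i \<bullet> (\<beta> - (\<Sum>j\<in>UNIV - {i}. q$j *\<^sub>R a j))) + \<gamma>$i"
proof -
  define w where "w = \<beta> - (\<Sum>j\<in>UNIV - {i}. q$j *\<^sub>R a j)"
  define A where "A = \<alpha> * (a i \<bullet> w) + \<gamma>$i"
  have ai: "norm (a i) = 1" and qi: "q$i \<ge> 0"
    and best: "\<And>u x. norm u = 1 \<Longrightarrow> x \<ge> 0 \<Longrightarrow>
                 profit \<alpha> \<beta> \<gamma> a q i u x \<le> profit \<alpha> \<beta> \<gamma> a q i (a i) (q$i)"
    using eq unfolding is_equilibrium_def by blast+
  have own: "profit \<alpha> \<beta> \<gamma> a q i (a i) x = A * x - (1 + \<alpha>) * x\<^sup>2" for x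
    unfolding profit_as_quadratic A_def w_def ..
  txt \<open>Turning towards the residual demand and producing \<open>\<gamma>$i / (2(1+\<alpha>))\<close>
    already yields a positive profit, so the equilibrium profit is positive.\<close>
  define u where "u = (if a i \<bullet> w \<ge> 0 then a i else - a i)"
  define e where "e = \<gamma>$i / (2 * (1 + \<alpha>))"
  have u: "norm u = 1" "u \<bullet> w \<ge> 0" unfolding u_def using ai by auto
  have e: "e \<ge> 0" unfolding e_def using \<alpha> \<gamma> by simp
  have "0 < (\<gamma>$i)\<^sup>2 / (4 * (1 + \<alpha>))" using \<alpha> \<gamma> by simp
  also have "\<dots> = \<gamma>$i * e - (1 + \<alpha>) * e\<^sup>2"
  proof -
    define c where "c = 1 + \<alpha>"
    have "c > 0" using \<alpha> unfolding c_def by simp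
    then show ?thesis unfolding e_def c_def[symmetric] by (simp add: field_simps power2_eq_square)
  qed
  also have "\<dots> \<le> profit \<alpha> \<beta> \<gamma> a q i u e"
    unfolding profit_as_quadratic w_def[symmetric] using \<alpha> u e by (simp add: algebra_simps)
  also have "\<dots> \<le> A * q$i - (1 + \<alpha>) * (q$i)\<^sup>2"
    using best[OF u(1) e] own by simp
  finally have "A * q$i > (1 + \<alpha>) * (q$i)\<^sup>2" by simp
  moreover have "(1 + \<alpha>) * (q$i)\<^sup>2 \<ge> 0" using \<alpha> by simp
  ultimately have "A * q$i > 0" by linarith
  then have "A \<ge> 0" using qi by (simp add: zero_less_mult_iff)
  moreover have "\<forall>x\<ge>0. A * x - (1 + \<alpha>) * x\<^sup>2 \<le> A * q$i - (1 + \<alpha>) * (q$i)\<^sup>2"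
    using best[OF ai] own by simp
  ultimately show ?thesis
    using concave_quadratic_argmax[of "1 + \<alpha>" A "q$i"] \<alpha> qi unfolding A_def w_def by simp
qed

lemma sign_vector_inner_self:
  fixes \<sigma> :: "real^'n::finite"
  assumes "\<forall>i. \<sigma>$i = -1 \<or> \<sigma>$i = 1"
  shows "\<sigma> \<bullet> \<sigma> = real CARD('n)"
proof -
  have "\<sigma>$i * \<sigma>$i = 1" for i using assms by (metis mult_1 mult_minus1 minus_minus)
  then show ?thesis unfolding inner_vec_def by simp
qed

lemma xvec_collinear:
  assumes "\<forall>i. a i = \<sigma>$i *\<^sub>R \<beta>"
  shows "xvec a q = (\<sigma> \<bullet> q) *\<^sub>R \<beta>"
  unfolding xvec_def inner_vec_def using assms by (simp add: scaleR_sum_left mult.commute)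

lemma collinear_equilibrium_quantities:
  assumes eq: "is_equilibrium \<alpha> \<beta> \<gamma> a q" and \<alpha>: "\<alpha> \<ge> 0" and \<gamma>: "\<forall>i. \<gamma>$i > 0"
    and \<beta>: "\<beta> \<bullet> \<beta> = 1" and \<sigma>: "\<forall>i. \<sigma>$i = -1 \<or> \<sigma>$i = 1"
    and a: "\<forall>i. a i = \<sigma>$i *\<^sub>R \<beta>"
  shows "(2 + \<alpha>) *\<^sub>R q = \<gamma> + (\<alpha> * (1 - \<sigma> \<bullet> q)) *\<^sub>R \<sigma>"
proof (subst vec_eq_iff, intro allI)
  fix i
  have \<sigma>i: "\<sigma>$i * \<sigma>$i = 1" using \<sigma> by (metis mult_1 mult_minus1 minus_minus)
  have others: "(\<Sum>j\<in>UNIV - {i}. q$j *\<^sub>R a j) = (\<sigma> \<bullet> q - \<sigma>$i * q$i) *\<^sub>R \<beta>"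
  proof -
    have "(\<Sum>j\<in>UNIV - {i}. q$j *\<^sub>R a j) = (\<Sum>j\<in>UNIV - {i}. \<sigma>$j * q$j) *\<^sub>R \<beta>"
      using a by (simp add: scaleR_sum_left mult.commute)
    also have "(\<Sum>j\<in>UNIV - {i}. \<sigma>$j * q$j) = \<sigma> \<bullet> q - \<sigma>$i * q$i"
      unfolding inner_vec_def by (simp add: sum_diff1)
    finally show ?thesis .
  qed
  have "a i \<bullet> (\<beta> - (\<Sum>j\<in>UNIV - {i}. q$j *\<^sub>R a j)) = \<sigma>$i * (1 - \<sigma> \<bullet> q) + q$i"
    unfolding others using a \<beta> \<sigma>i by (simp add: algebra_simps)
  then have "2 * (1 + \<alpha>) * q$i = \<alpha> * (\<sigma>$i * (1 - \<sigma> \<bullet> q) + q$i) + \<gamma>$i"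
    using equilibrium_first_order[OF eq \<alpha>] \<gamma> by simp
  then show "((2 + \<alpha>) *\<^sub>R q)$i = (\<gamma> + (\<alpha> * (1 - \<sigma> \<bullet> q)) *\<^sub>R \<sigma>)$i"
    by (simp add: algebra_simps)
qed

lemma collinear_equilibrium_aggregate:
  assumes "(2 + \<alpha>) *\<^sub>R q = \<gamma> + (\<alpha> * (1 - \<sigma> \<bullet> q)) *\<^sub>R \<sigma>"
  shows "(1 - \<sigma> \<bullet> q) * (2 + (\<sigma> \<bullet> \<sigma> + 1) * \<alpha>) = 2 + \<alpha> - \<sigma> \<bullet> \<gamma>"
proof -
  have "(2 + \<alpha>) * (\<sigma> \<bullet> q) = \<sigma> \<bullet> \<gamma> + \<alpha> * (1 - \<sigma> \<bullet> q) * (\<sigma> \<bullet> \<sigma>)"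
    using arg_cong[OF assms, of "inner \<sigma>"] by (simp add: inner_add_right)
  then show ?thesis by (simp add: algebra_simps)
qed

lemma Omega_collinear:
  assumes "xvec a q = s *\<^sub>R \<beta>" and "\<beta> \<bullet> \<beta> = 1"
  shows "Omega \<alpha> \<beta> \<gamma> a q = \<alpha> * (s - s\<^sup>2 / 2) + (q \<bullet> \<gamma> - q \<bullet> q / 2)"
  unfolding Omega_def using assms by (simp add: power2_eq_square)

lemma quadratic_surplus_shift:
  fixes q v \<gamma> :: "'a::real_inner"
  shows "(q \<bullet> \<gamma> - q \<bullet> q / 2) - ((q + v) \<bullet> \<gamma> - (q + v) \<bullet> (q + v) / 2) = v \<bullet> (q - \<gamma>) + v \<bullet> v / 2"
  by (simp add: inner_add_left inner_add_right inner_diff_right inner_commute algebra_simps)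

lemma surplus_gap:
  fixes \<alpha> t :: real and \<beta> :: "real^'m::finite" and \<gamma> \<sigma> :: "real^'n::finite"
  assumes \<alpha>: "\<alpha> > 0" and \<beta>: "\<beta> \<bullet> \<beta> = 1"
    and xd: "xvec ad qd = \<beta>" and qd: "qd = (1 / (2 + \<alpha>)) *\<^sub>R \<gamma>"
    and xs: "xvec as qs = (1 - t) *\<^sub>R \<beta>" and qs: "(2 + \<alpha>) *\<^sub>R qs = \<gamma> + (\<alpha> * t) *\<^sub>R \<sigma>"
  shows "Omega \<alpha> \<beta> \<gamma> ad qd - Omega \<alpha> \<beta> \<gamma> as qs =
           \<alpha> * t / (2 * (2 + \<alpha>)\<^sup>2) * (t * ((2 + \<alpha>)\<^sup>2 + \<alpha> * (\<sigma> \<bullet> \<sigma>)) - 2 * (1 + \<alpha>) * (\<sigma> \<bullet> \<gamma>))"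
proof -
  define d where "d = 2 + \<alpha>"
  have d: "d > 0" using \<alpha> unfolding d_def by simp
  define v where "v = (\<alpha> * t / d) *\<^sub>R \<sigma>"
  have qs_shift: "qs = qd + v"
  proof -
    have "qs = (1 / d) *\<^sub>R (d *\<^sub>R qs)" using d by simp
    also have "d *\<^sub>R qs = \<gamma> + (\<alpha> * t) *\<^sub>R \<sigma>" using qs unfolding d_def .
    finally show ?thesis unfolding qd v_def d_def by (simp add: scaleR_add_right)
  qed
  have qd_residual: "qd - \<gamma> = - ((1 + \<alpha>) / d) *\<^sub>R \<gamma>"
    unfolding qd d_def using \<alpha> by (simp add: vec_eq_iff field_simps)
  have "Omega \<alpha> \<beta> \<gamma> ad qd - Omega \<alpha> \<beta> \<gamma> as qs
      = \<alpha> * t\<^sup>2 / 2 + v \<bullet> (qd - \<gamma>) + v \<bullet> v / 2"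
  proof -
    have "Omega \<alpha> \<beta> \<gamma> ad qd = \<alpha> / 2 + (qd \<bullet> \<gamma> - qd \<bullet> qd / 2)"
      using Omega_collinear[of ad qd 1 \<beta>] xd \<beta> by simp
    moreover have "Omega \<alpha> \<beta> \<gamma> as qs = \<alpha> * ((1 - t) - (1 - t)\<^sup>2 / 2) + (qs \<bullet> \<gamma> - qs \<bullet> qs / 2)"
      using Omega_collinear[OF xs \<beta>] .
    moreover have "\<alpha> / 2 - \<alpha> * ((1 - t) - (1 - t)\<^sup>2 / 2) = \<alpha> * t\<^sup>2 / 2"
      by (simp add: power2_eq_square field_simps)
    ultimately show ?thesis using quadratic_surplus_shift[of qd \<gamma> v] unfolding qs_shift by linarith
  qed
  also have "\<dots> = \<alpha> * t\<^sup>2 / 2 - \<alpha> * t * (1 + \<alpha>) / d\<^sup>2 * (\<sigma> \<bullet> \<gamma>) + (\<alpha> * t / d)\<^sup>2 * (\<sigma> \<bullet> \<sigma>) / 2"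
    unfolding qd_residual v_def by (simp add: inner_commute power2_eq_square)
  also have "\<dots> = \<alpha> * t / (2 * d\<^sup>2) * (t * (d\<^sup>2 + \<alpha> * (\<sigma> \<bullet> \<sigma>)) - 2 * (1 + \<alpha>) * (\<sigma> \<bullet> \<gamma>))"
    using d by (simp add: field_simps power2_eq_square)
  finally show ?thesis unfolding d_def .
qed

lemma surplus_gap_factor_pos:
  fixes \<alpha> n p t :: real
  assumes \<alpha>: "\<alpha> > 0" and n: "n > 0"
    and t: "t * (2 + (n + 1) * \<alpha>) = 2 + \<alpha> - p"
    and p: "p > 2 + \<alpha> \<or> p < n * \<alpha> * (2 + \<alpha>) / (2 * (1 + \<alpha>) * (2 + (n + 1) * \<alpha>) + n * \<alpha>)"
  shows "t * (t * ((2 + \<alpha>)\<^sup>2 + \<alpha> * n) - 2 * (1 + \<alpha>) * p) > 0"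
proof -
  define d where "d = 2 + \<alpha>"
  define N where "N = 2 + (n + 1) * \<alpha>"
  have d: "d > 0" and N: "N > 0" using \<alpha> n unfolding d_def N_def by (simp_all add: add_pos_nonneg)
  define X where "X = d\<^sup>2 + \<alpha> * n"
  define Y where "Y = 2 * (1 + \<alpha>) * N"
  have X: "X > 0" and Y: "Y > 0" using d N \<alpha> n unfolding X_def Y_def by (simp_all add: add_pos_pos)
  define h where "h = t * X - 2 * (1 + \<alpha>) * p"
  have tN: "t * N = d - p" using t unfolding d_def N_def .
  have "h * N = (t * N) * X - p * Y"
    unfolding h_def Y_def by (simp add: algebra_simps)
  then have hN: "h * N = d * X - p * (X + Y)"
    unfolding tN by (simp add: algebra_simps)
  txt \<open>\<open>h N\<close> is affine and decreasing in \<open>p\<close>; the threshold in the hypothesis is a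
    sufficient, not a sharp, bound for \<open>h > 0\<close>.\<close>
  from p consider "p > d" | "p < n * \<alpha> * d / (Y + n * \<alpha>)"
    unfolding d_def N_def Y_def by (auto simp: mult.assoc)
  then have "t * h > 0"
  proof cases
    case 1
    have "d * X < d * (X + Y)" using d Y by simp
    also have "\<dots> < p * (X + Y)" using 1 X Y by (simp add: mult_strict_right_mono)
    finally have "h * N < 0" unfolding hN by simp
    then have "h < 0" using N by (simp add: mult_less_0_iff)
    moreover have "t * N < 0" using tN 1 by simp
    then have "t < 0" using N by (simp add: mult_less_0_iff)
    ultimately show ?thesis by (simp add: mult_neg_neg)
  next
    case 2
    have K: "Y + n * \<alpha> > 0" using Y \<alpha> n by (simp add: add_pos_pos)
    then have below: "p * (Y + n * \<alpha>) < n * \<alpha> * d"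
      using 2 by (simp add: pos_less_divide_eq)
    have "p < d"
    proof (rule ccontr)
      assume "\<not> p < d"
      then have "d * (Y + n * \<alpha>) \<le> p * (Y + n * \<alpha>)" using K by (simp add: mult_right_mono)
      moreover have "n * \<alpha> * d < d * (Y + n * \<alpha>)" using d Y by (simp add: algebra_simps)
      ultimately show False using below by linarith
    qed
    then have "t * N > 0" using tN by simp
    then have "t > 0" using N by (simp add: zero_less_mult_iff)
    moreover have "p * d\<^sup>2 < d * d\<^sup>2" using \<open>p < d\<close> d by simp
    then have "h * N > 0" unfolding hN X_def using below by (simp add: algebra_simps)
    then have "h > 0" using N by (simp add: zero_less_mult_iff)
    ultimately show ?thesis by simp
  qed
  then show ?thesis unfolding h_def X_def d_def .
qed

lemma collinear_equilibrium_surplus_gap: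
  fixes \<alpha> :: real and \<beta> :: "real^'m::finite" and \<gamma> \<sigma> :: "real^'n::finite"
  assumes \<alpha>: "\<alpha> > 0" and \<beta>: "norm \<beta> = 1" and \<gamma>: "\<forall>i. \<gamma>$i > 0"
    and xd: "xvec ad qd = \<beta>" and qd: "qd = (1 / (2 + \<alpha>)) *\<^sub>R \<gamma>"
    and \<sigma>: "\<forall>i. \<sigma>$i = -1 \<or> \<sigma>$i = 1"
    and eqs: "is_equilibrium \<alpha> \<beta> \<gamma> as qs" and as: "\<forall>i. as i = \<sigma>$i *\<^sub>R \<beta>"
  obtains t where "t * (2 + (real CARD('n) + 1) * \<alpha>) = 2 + \<alpha> - \<sigma> \<bullet> \<gamma>"
    and "Omega \<alpha> \<beta> \<gamma> ad qd - Omega \<alpha> \<beta> \<gamma> as qs =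
           \<alpha> / (2 * (2 + \<alpha>)\<^sup>2) *
           (t * (t * ((2 + \<alpha>)\<^sup>2 + \<alpha> * real CARD('n)) - 2 * (1 + \<alpha>) * (\<sigma> \<bullet> \<gamma>)))"
proof
  define t where "t = 1 - \<sigma> \<bullet> qs"
  have \<beta>\<beta>: "\<beta> \<bullet> \<beta> = 1" using \<beta> by (simp add: dot_square_norm)
  have \<sigma>\<sigma>: "\<sigma> \<bullet> \<sigma> = real CARD('n)" using sign_vector_inner_self[OF \<sigma>] .
  have qs: "(2 + \<alpha>) *\<^sub>R qs = \<gamma> + (\<alpha> * t) *\<^sub>R \<sigma>"
    using collinear_equilibrium_quantities[OF eqs _ \<gamma> \<beta>\<beta> \<sigma> as] \<alpha> unfolding t_def by simp
  show "t * (2 + (real CARD('n) + 1) * \<alpha>) = 2 + \<alpha> - \<sigma> \<bullet> \<gamma>"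
    using collinear_equilibrium_aggregate[OF qs[unfolded t_def]] \<sigma>\<sigma> unfolding t_def by simp
  have xs: "xvec as qs = (1 - t) *\<^sub>R \<beta>" using xvec_collinear[OF as] unfolding t_def by simp
  show "Omega \<alpha> \<beta> \<gamma> ad qd - Omega \<alpha> \<beta> \<gamma> as qs =
      \<alpha> / (2 * (2 + \<alpha>)\<^sup>2) *
      (t * (t * ((2 + \<alpha>)\<^sup>2 + \<alpha> * real CARD('n)) - 2 * (1 + \<alpha>) * (\<sigma> \<bullet> \<gamma>)))"
    using surplus_gap[OF \<alpha> \<beta>\<beta> xd qd xs qs] \<sigma>\<sigma> by simp
qed

theorem theorem4:
  fixes \<alpha> :: real and \<beta> :: "real^'m::finite" and \<gamma> :: "real^'n::finite"
    and ad :: "'n \<Rightarrow> real^'m" and qd :: "real^'n"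
    and as :: "'n \<Rightarrow> real^'m" and qs :: "real^'n"
    and \<sigma> :: "real^'n"
  assumes n2: "CARD('n) \<ge> 2" and m2: "CARD('m) \<ge> 2"
    and alpha: "\<alpha> > 0" and beta: "norm \<beta> = 1" and gamma: "\<forall>i. \<gamma>$i > 0"
    and lower: "rnorm \<gamma> \<le> 2 + \<alpha>" and upper: "2 + \<alpha> \<le> Rnorm \<gamma>"
    and eqd: "is_equilibrium \<alpha> \<beta> \<gamma> ad qd"
    and xd: "xvec ad qd = \<beta>"
    and qd: "qd = (1 / (2 + \<alpha>)) *\<^sub>R \<gamma>"
    and sigma: "\<forall>i. \<sigma>$i = -1 \<or> \<sigma>$i = 1"
    and eqs: "is_equilibrium \<alpha> \<beta> \<gamma> as qs"
    and as: "\<forall>i. as i = \<sigma>$i *\<^sub>R \<beta>"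
  shows "((\<sigma> \<bullet> \<gamma> > 2 + \<alpha> \<or>
           \<sigma> \<bullet> \<gamma> < real CARD('n) * \<alpha> * (2 + \<alpha>) /
                   (2 * (1 + \<alpha>) * (2 + (real CARD('n) + 1) * \<alpha>) + real CARD('n) * \<alpha>))
          \<longrightarrow> Omega \<alpha> \<beta> \<gamma> ad qd > Omega \<alpha> \<beta> \<gamma> as qs)
       \<and> ((\<forall>i. \<sigma>$i = 1) \<longrightarrow>
           Omega \<alpha> \<beta> \<gamma> ad qd \<ge> Omega \<alpha> \<beta> \<gamma> as qs \<and>
           (Rnorm \<gamma> \<noteq> 2 + \<alpha> \<longrightarrow> Omega \<alpha> \<beta> \<gamma> ad qd > Omega \<alpha> \<beta> \<gamma> as qs))
       \<and> (\<sigma> \<bullet> \<gamma> \<le> 0 \<longrightarrow> Omega \<alpha> \<beta> \<gamma> ad qd > Omega \<alpha> \<beta> \<gamma> as qs)"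
proof -
  let ?n = "real CARD('n)"
  define p where "p = \<sigma> \<bullet> \<gamma>"
  obtain t where t_eq: "t * (2 + (?n + 1) * \<alpha>) = 2 + \<alpha> - p"
    and gap: "Omega \<alpha> \<beta> \<gamma> ad qd - Omega \<alpha> \<beta> \<gamma> as qs =
      \<alpha> / (2 * (2 + \<alpha>)\<^sup>2) * (t * (t * ((2 + \<alpha>)\<^sup>2 + \<alpha> * ?n) - 2 * (1 + \<alpha>) * p))"
    using collinear_equilibrium_surplus_gap[OF alpha beta gamma xd qd sigma eqs as] unfolding p_def .
  have strict: "Omega \<alpha> \<beta> \<gamma> ad qd > Omega \<alpha> \<beta> \<gamma> as qs"
    if "p > 2 + \<alpha> \<or> p < ?n * \<alpha> * (2 + \<alpha>) / (2 * (1 + \<alpha>) * (2 + (?n + 1) * \<alpha>) + ?n * \<alpha>)"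
  proof -
    have "?n > 0" by simp
    moreover have "\<alpha> / (2 * (2 + \<alpha>)\<^sup>2) > 0" using alpha by simp
    ultimately have "Omega \<alpha> \<beta> \<gamma> ad qd - Omega \<alpha> \<beta> \<gamma> as qs > 0"
      unfolding gap using surplus_gap_factor_pos[OF alpha _ t_eq that] by (simp only: mult_pos_pos)
    then show ?thesis by simp
  qed
  have all_ones: "Omega \<alpha> \<beta> \<gamma> ad qd \<ge> Omega \<alpha> \<beta> \<gamma> as qs \<and>
      (Rnorm \<gamma> \<noteq> 2 + \<alpha> \<longrightarrow> Omega \<alpha> \<beta> \<gamma> ad qd > Omega \<alpha> \<beta> \<gamma> as qs)" if "\<forall>i. \<sigma>$i = 1"
  proof -
    have "p = Rnorm \<gamma>" unfolding p_def Rnorm_def inner_vec_def using that gamma by (simp add: less_imp_le)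
    then consider "p = 2 + \<alpha>" | "p > 2 + \<alpha>" using upper by linarith
    then show ?thesis
    proof cases
      case 1
      have "2 + (?n + 1) * \<alpha> > 0" using alpha by (simp add: add_pos_nonneg)
      then have "t = 0" using t_eq 1 by simp
      then show ?thesis using gap 1 \<open>p = Rnorm \<gamma>\<close> by simp
    qed (use strict in auto)
  qed
  have "?n * \<alpha> * (2 + \<alpha>) / (2 * (1 + \<alpha>) * (2 + (?n + 1) * \<alpha>) + ?n * \<alpha>) > 0"
    using alpha by (simp add: add_pos_nonneg)
  then show ?thesis using strict all_ones unfolding p_def by force
qed

end
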